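(* Let $X(t)$, $t\in T$, be a separable centered Gaussian random function with $\rho(s,t)=(\mathbb{E}(X(t)-X(s))^2)^{1/2}$, $(T,\rho)$ relatively compact, and covering numbers $N(\varepsilon)$. Let $\Psi$ be a function with $N(\varepsilon)\le\Psi(\varepsilon)$ for all $\varepsilon>0$, and assume there are $\varepsilon_0>0$ and $C_2>1$ with $\Psi(\varepsilon/2)\le C_2\Psi(\varepsilon)$ for all $0<\varepsilon\le\varepsilon_0$. Then for every $\varepsilon\in(0,\varepsilon_0)$ and every $r\in(\tfrac12,1)$, $$\prod_{k=0}^\infty\mathbb{P}(2^{-k}\varepsilon|\xi|\le r^k\varepsilon)^{N(2^{-k-1}\varepsilon)}\ge\exp\{-C_3(r)\Psi(\varepsilon)\},$$ where $\xi$ is standard normal and $C_3(r)$ depends only on $C_2$ and $r$.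
   Context: $N(\varepsilon)$ is the minimal number of points $t_1,\dots,t_n\in T$ such that every $t\in T$ has $\rho(t,t_i)\le\varepsilon$ for some $i$. *)

theory Defs
  imports "HOL-Probability.Probability"
begin

definition covering_number :: "'a set \<Rightarrow> ('a \<Rightarrow> 'a \<Rightarrow> real) \<Rightarrow> real \<Rightarrow> nat" where
  "covering_number T \<rho> \<epsilon> =
     (LEAST n. \<exists>F. F \<subseteq> T \<and> finite F \<and> card F = n \<and> (\<forall>t\<in>T. \<exists>s\<in>F. \<rho> t s \<le> \<epsilon>))"

text \<open>Relative compactness of the pseudometric space (T, rho), i.e. total boundedness.\<close>
definition relatively_compact :: "'a set \<Rightarrow> ('a \<Rightarrow> 'a \<Rightarrow> real) \<Rightarrow> bool" where
  "relatively_compact T \<rho> \<longleftrightarrow>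
     (\<forall>\<epsilon>>0. \<exists>F. F \<subseteq> T \<and> finite F \<and> (\<forall>t\<in>T. \<exists>s\<in>F. \<rho> t s \<le> \<epsilon>))"

definition centered_gaussian_process :: "'b measure \<Rightarrow> 'a set \<Rightarrow> ('a \<Rightarrow> 'b \<Rightarrow> real) \<Rightarrow> bool" where
  "centered_gaussian_process M T X \<longleftrightarrow>
     prob_space M \<and> (\<forall>t\<in>T. X t \<in> borel_measurable M) \<and>
     (\<forall>F c. finite F \<and> F \<subseteq> T \<longrightarrow>
        (AE \<omega> in M. (\<Sum>t\<in>F. c t * X t \<omega>) = 0) \<or>
        (\<exists>\<sigma>>0. distributed M lborel (\<lambda>\<omega>. \<Sum>t\<in>F. c t * X t \<omega>) (normal_density 0 \<sigma>)))"

definition gauss_dist :: "'b measure \<Rightarrow> ('a \<Rightarrow> 'b \<Rightarrow> real) \<Rightarrow> 'a \<Rightarrow> 'a \<Rightarrow> real" where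
  "gauss_dist M X s t = sqrt (integral\<^sup>L M (\<lambda>\<omega>. (X t \<omega> - X s \<omega>)^2))"

text \<open>Separability of the random function (sequential form of Doob's separability):
  there are a countable set D and a null set outside of which every value X t \<omega>
  is the limit of X (d n) \<omega> along some sequence d n in D converging to t.\<close>
definition separable_process :: "'b measure \<Rightarrow> 'a set \<Rightarrow> ('a \<Rightarrow> 'a \<Rightarrow> real) \<Rightarrow> ('a \<Rightarrow> 'b \<Rightarrow> real) \<Rightarrow> bool" where
  "separable_process M T \<rho> X \<longleftrightarrow>
     (\<exists>D N. D \<subseteq> T \<and> countable D \<and> N \<in> null_sets M \<and>
        (\<forall>\<omega>\<in>space M - N. \<forall>t\<in>T. \<exists>d. (\<forall>n. d n \<in> D) \<and>
            (\<lambda>n. \<rho> (d n) t) \<longlonglongrightarrow> 0 \<and> (\<lambda>n. X (d n) \<omega>) \<longlonglongrightarrow> X t \<omega>))"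

end

theory Submission
  imports Defs
begin

text \<open>Only the covering bound N \<le> \<Psi> enters. Writing a = 2r > 1, the k-th factor is
  P(|\<xi>| \<le> a^k) ^ N(2^-(k+1) \<epsilon>). Markov's inequality for a moment E \<xi>^2m with a^2m > C2 gives
  -ln P(|\<xi>| \<le> a^k) = O(a^-2mk), whereas doubling gives N(2^-(k+1) \<epsilon>) \<le> C2^(k+1) \<Psi>(\<epsilon>).
  Hence the logarithm of the product is bounded below by \<Psi>(\<epsilon>) times a convergent
  geometric series with ratio C2 / a^2m < 1.\<close>

lemma std_normal_abs_gt_le_moment:
  assumes "t > 0"
  shows "measure std_normal_distribution {x. t < \<bar>x\<bar>} \<le> fact (2 * m) / (2^m * fact m) / t^(2*m)"
proof -
  interpret real_distribution std_normal_distribution by (rule real_dist_normal_dist)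
  have "t^(2*m) \<le> x^(2*m)" if "t < \<bar>x\<bar>" for x
    using assms that power_mono[of t "\<bar>x\<bar>" "2*m"] by (simp add: power_even_abs)
  then have "{x. t < \<bar>x\<bar>} \<subseteq> {x \<in> space std_normal_distribution. t^(2*m) \<le> x^(2*m)}"
    by auto
  then have "measure std_normal_distribution {x. t < \<bar>x\<bar>}
      \<le> measure std_normal_distribution {x \<in> space std_normal_distribution. t^(2*m) \<le> x^(2*m)}"
    by (intro finite_measure_mono) measurable
  also have "\<dots> \<le> (LINT x|std_normal_distribution. x^(2*m)) / t^(2*m)"
    using assms
    by (intro integral_Markov_inequality_measure[OF std_normal_distribution_even_moments(2),
          where A="space std_normal_distribution"] AE_I2)
       (simp_all add: zero_le_even_power)
  finally show ?thesis by (simp add: std_normal_distribution_even_moments(1))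
qed

lemma std_normal_abs_le_one_pos: "measure std_normal_distribution {x. \<bar>x\<bar> \<le> 1} > 0"
proof -
  let ?c = "std_normal_density 1"
  have c: "?c > 0" by (simp add: normal_density_pos)
  have "ennreal ?c * 2 = (\<integral>\<^sup>+ x. ennreal ?c * indicator {-1..1::real} x \<partial>lborel)"
    by (subst nn_integral_cmult_indicator) auto
  also have "\<dots> \<le> (\<integral>\<^sup>+ x. ennreal (std_normal_density x) * indicator {x. \<bar>x\<bar> \<le> 1} x \<partial>lborel)"
  proof (intro nn_integral_mono)
    fix x :: real
    have "?c \<le> std_normal_density x" if "\<bar>x\<bar> \<le> 1"
    proof -
      have "x^2 \<le> 1"
        using that by (metis abs_ge_zero abs_mult_self_eq mult_le_one power2_eq_square)
      then show ?thesis by (simp add: normal_density_def divide_right_mono)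
    qed
    then show "ennreal ?c * indicator {-1..1} x
        \<le> ennreal (std_normal_density x) * indicator {x. \<bar>x\<bar> \<le> 1} x"
      by (auto simp: indicator_def)
  qed
  also have "\<dots> = emeasure std_normal_distribution {x. \<bar>x\<bar> \<le> 1}"
    by (subst emeasure_density) auto
  also have "\<dots> = ennreal (measure std_normal_distribution {x. \<bar>x\<bar> \<le> 1})"
    using real_dist_normal_dist
    by (simp add: finite_measure.emeasure_eq_measure real_distribution_def prob_space_def)
  finally have "ennreal (2 * ?c) \<le> ennreal (measure std_normal_distribution {x. \<bar>x\<bar> \<le> 1})"
    using c by (simp add: ennreal_mult' mult.commute)
  then have "2 * ?c \<le> measure std_normal_distribution {x. \<bar>x\<bar> \<le> 1}"
    by (simp add: ennreal_le_iff[OF measure_nonneg])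
  with c show ?thesis by simp
qed

lemma ln_ge_neg_complement_div:
  fixes p q :: real
  assumes "0 < q" "q \<le> p" "p \<le> 1"
  shows "- ((1 - p) / q) \<le> ln p"
proof -
  have "ln (1 / p) \<le> 1 / p - 1" using assms by (intro ln_le_minus_one) simp
  then have "- ((1 - p) / p) \<le> ln p" using assms by (simp add: ln_div field_simps)
  moreover have "(1 - p) / p \<le> (1 - p) / q" using assms by (intro divide_left_mono) auto
  ultimately show ?thesis by linarith
qed

text \<open>The numerator is the moment E \<xi>^2m of the standard normal law.\<close>

definition small_ball_const :: "nat \<Rightarrow> real" where
  "small_ball_const m =
     fact (2 * m) / (2^m * fact m) / measure std_normal_distribution {x. \<bar>x\<bar> \<le> 1}"

lemma std_normal_abs_le_pos:
  assumes "t \<ge> 1"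
  shows "measure std_normal_distribution {x. \<bar>x\<bar> \<le> t} > 0"
proof -
  interpret real_distribution std_normal_distribution by (rule real_dist_normal_dist)
  have "prob {x. \<bar>x\<bar> \<le> 1} \<le> prob {x. \<bar>x\<bar> \<le> t}"
    using assms by (intro finite_measure_mono) auto
  with std_normal_abs_le_one_pos show ?thesis by simp
qed

lemma ln_std_normal_abs_le_ge:
  fixes a :: real
  assumes "a \<ge> 1"
  shows "- small_ball_const m * (1 / a^(2*m))^k
         \<le> ln (measure std_normal_distribution {x. \<bar>x\<bar> \<le> a^k})"
proof -
  interpret real_distribution std_normal_distribution by (rule real_dist_normal_dist)
  let ?P = "\<lambda>t. prob {x. \<bar>x\<bar> \<le> t}"
  let ?K = "fact (2 * m) / (2^m * fact m) :: real"
  have ak: "1 \<le> a^k" using assms by (simp add: one_le_power)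
  have "1 - ?P (a^k) = prob {x. a^k < \<bar>x\<bar>}"
    using prob_compl[of "{x. \<bar>x\<bar> \<le> a^k}"] by (simp add: set_diff_eq not_le)
  also have "\<dots> \<le> ?K / (a^k)^(2*m)"
    using ak by (intro std_normal_abs_gt_le_moment) simp
  also have "\<dots> = ?K * (1 / a^(2*m))^k"
    by (simp add: power_mult[symmetric] mult.commute power_one_over)
  finally have tail: "1 - ?P (a^k) \<le> ?K * (1 / a^(2*m))^k" .
  have "- small_ball_const m * (1 / a^(2*m))^k = - (?K * (1 / a^(2*m))^k / ?P 1)"
    by (simp add: small_ball_const_def)
  also have "\<dots> \<le> - ((1 - ?P (a^k)) / ?P 1)"
    using std_normal_abs_le_one_pos by (intro le_imp_neg_le divide_right_mono tail) simp
  also have "\<dots> \<le> ln (?P (a^k))"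
    using std_normal_abs_le_one_pos ak
    by (intro ln_ge_neg_complement_div finite_measure_mono) auto
  finally show ?thesis .
qed

lemma doubling_iterate:
  fixes \<Psi> :: "real \<Rightarrow> real"
  assumes doubling: "\<And>e. 0 < e \<Longrightarrow> e \<le> \<epsilon>0 \<Longrightarrow> \<Psi> (e/2) \<le> C * \<Psi> e"
    and "C \<ge> 0" "0 < \<epsilon>" "\<epsilon> \<le> \<epsilon>0"
  shows "\<Psi> ((1/2)^j * \<epsilon>) \<le> C^j * \<Psi> \<epsilon>"
proof (induction j)
  case 0
  then show ?case by simp
next
  case (Suc j)
  have "(1/2::real)^j * \<epsilon> \<le> \<epsilon>"
    using \<open>0 < \<epsilon>\<close> by (simp add: mult_left_le_one_le power_le_one)
  moreover have "0 < (1/2::real)^j * \<epsilon>"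
    using \<open>0 < \<epsilon>\<close> by simp
  ultimately have "\<Psi> ((1/2)^j * \<epsilon> / 2) \<le> C * \<Psi> ((1/2)^j * \<epsilon>)"
    using \<open>\<epsilon> \<le> \<epsilon>0\<close> by (intro doubling) linarith+
  also have "\<dots> \<le> C * (C^j * \<Psi> \<epsilon>)"
    using Suc \<open>C \<ge> 0\<close> by (intro mult_left_mono)
  finally show ?case by simp
qed

lemma prodinf_power_ge_exp:
  fixes p :: "nat \<Rightarrow> real" and N :: "nat \<Rightarrow> nat"
  assumes "\<And>k. 0 < p k" "\<And>k. p k \<le> 1"
    and "\<And>k. - (D * b^k) \<le> real (N k) * ln (p k)"
    and "0 \<le> b" "b < 1"
  shows "exp (- D / (1 - b)) \<le> (\<Prod>k. p k ^ N k)"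
proof -
  define g where "g k = real (N k) * ln (p k)" for k
  have g_nonpos: "g k \<le> 0" for k
    using assms by (simp add: g_def mult_nonneg_nonpos)
  have geom: "summable (\<lambda>k. D * b^k)"
    using assms by (intro summable_mult summable_geometric) simp
  have g_summable: "summable g"
  proof (rule summable_comparison_test'[OF geom])
    show "norm (g k) \<le> D * b^k" for k
      using assms(3)[of k] g_nonpos[of k] by (simp add: g_def)
  qed
  have "- D / (1 - b) = (\<Sum>k. - (D * b^k))"
    using assms by (simp add: suminf_minus[OF geom] suminf_mult suminf_geometric)
  also have "\<dots> \<le> suminf g"
    using assms geom g_summable
    by (intro suminf_le) (auto simp: g_def intro: summable_minus)
  also have "exp (suminf g) = (\<Prod>k. exp (g k))"
    by (rule prodinf_exp[OF g_summable, symmetric])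
  also have "\<dots> = (\<Prod>k. p k ^ N k)"
    using assms by (simp add: g_def exp_of_nat_mult)
  finally show ?thesis by simp
qed

lemma prodinf_std_normal_power_ge_exp:
  fixes a C B :: real and N :: "nat \<Rightarrow> nat"
  assumes "1 < a" "0 \<le> C" "C < a^(2*m)" "0 \<le> B"
    and N_le: "\<And>k. real (N k) \<le> C^(k+1) * B"
  shows "exp (- (C * small_ball_const m / (1 - C / a^(2*m))) * B)
         \<le> (\<Prod>k. measure std_normal_distribution {x. \<bar>x\<bar> \<le> a^k} ^ N k)"
proof -
  let ?P = "\<lambda>k. measure std_normal_distribution {x. \<bar>x\<bar> \<le> a^k}"
  let ?b = "C / a^(2*m)"
  have P_pos: "0 < ?P k" for k
    using assms by (intro std_normal_abs_le_pos) (simp add: one_le_power)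
  have P_le: "?P k \<le> 1" for k
    by (simp add: prob_space.prob_le_1 real_distribution.axioms(1)[OF real_dist_normal_dist])
  have ln_P: "- small_ball_const m * (1 / a^(2*m))^k \<le> ln (?P k)" "ln (?P k) \<le> 0" for k
    using assms ln_std_normal_abs_le_ge[of a m k] P_pos[of k] P_le[of k] by auto
  have "- (B * C * small_ball_const m * ?b^k) \<le> real (N k) * ln (?P k)" for k
  proof -
    have "- (B * C * small_ball_const m * ?b^k)
          = C^(k+1) * B * (- small_ball_const m * (1 / a^(2*m))^k)"
      by (simp add: power_divide field_simps)
    also have "\<dots> \<le> C^(k+1) * B * ln (?P k)"
      using assms ln_P(1)[of k] by (intro mult_left_mono) auto
    also have "\<dots> \<le> real (N k) * ln (?P k)"
      using N_le[of k] ln_P(2)[of k] by (intro mult_right_mono_neg)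
    finally show ?thesis .
  qed
  then have "exp (- (B * C * small_ball_const m) / (1 - ?b)) \<le> (\<Prod>k. ?P k ^ N k)"
    using assms P_pos P_le by (intro prodinf_power_ge_exp) auto
  then show ?thesis by (simp add: mult_ac)
qed

theorem lemma3:
  fixes C2 r :: real
  assumes "C2 > 1" and "1/2 < r" and "r < 1"
  shows "\<exists>C3::real. \<forall>(M::'b measure) (T::'a set) X (\<Psi>::real \<Rightarrow> real) \<epsilon>0 \<epsilon>.
     centered_gaussian_process M T X \<and>
     separable_process M T (gauss_dist M X) X \<and>
     relatively_compact T (gauss_dist M X) \<and>
     (\<forall>e>0. real (covering_number T (gauss_dist M X) e) \<le> \<Psi> e) \<and>
     \<epsilon>0 > 0 \<and> (\<forall>e. 0 < e \<and> e \<le> \<epsilon>0 \<longrightarrow> \<Psi> (e/2) \<le> C2 * \<Psi> e) \<and>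
     0 < \<epsilon> \<and> \<epsilon> < \<epsilon>0
     \<longrightarrow> (\<Prod>k. measure (density lborel std_normal_density)
               {x. (1/2)^k * \<epsilon> * \<bar>x\<bar> \<le> r^k * \<epsilon>}
             ^ covering_number T (gauss_dist M X) ((1/2)^(k+1) * \<epsilon>))
         \<ge> exp (- C3 * \<Psi> \<epsilon>)"
proof -
  define a where "a = 2 * r"
  have "1 < a" using assms by (simp add: a_def)
  then have "1 < a^2" by (simp add: one_less_power)
  then obtain m where "C2 < (a^2)^m"
    using real_arch_pow by blast
  then have m: "C2 < a^(2*m)" by (simp add: power_mult)
  define C3 where "C3 = C2 * small_ball_const m / (1 - C2 / a^(2*m))"
  show ?thesis
  proof (intro exI[of _ C3] allI impI, elim conjE)
    fix M :: "'b measure" and T :: "'a set" and X \<Psi> \<epsilon>0 \<epsilon>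
    assume cov: "\<forall>e>0. real (covering_number T (gauss_dist M X) e) \<le> \<Psi> e"
      and dbl: "\<forall>e. 0 < e \<and> e \<le> \<epsilon>0 \<longrightarrow> \<Psi> (e/2) \<le> C2 * \<Psi> e"
      and "0 < \<epsilon>" "\<epsilon> < \<epsilon>0"
    have N_le: "real (covering_number T (gauss_dist M X) ((1/2)^(k+1) * \<epsilon>)) \<le> C2^(k+1) * \<Psi> \<epsilon>" for k
    proof -
      have "real (covering_number T (gauss_dist M X) ((1/2)^(k+1) * \<epsilon>)) \<le> \<Psi> ((1/2)^(k+1) * \<epsilon>)"
        using cov \<open>0 < \<epsilon>\<close> by simp
      also have "\<dots> \<le> C2^(k+1) * \<Psi> \<epsilon>"
        using dbl \<open>0 < \<epsilon>\<close> \<open>\<epsilon> < \<epsilon>0\<close> assms(1)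
        by (intro doubling_iterate[of \<epsilon>0]) simp_all
      finally show ?thesis .
    qed
    have "0 \<le> \<Psi> \<epsilon>"
      using cov \<open>0 < \<epsilon>\<close> by (meson of_nat_0_le_iff order_trans)
    have factor_eq: "{x. (1/2)^k * \<epsilon> * \<bar>x\<bar> \<le> r^k * \<epsilon>} = {x. \<bar>x\<bar> \<le> a^k}" for k
    proof -
      have "r^k * \<epsilon> = (1/2)^k * \<epsilon> * a^k"
        by (simp add: a_def power_mult_distrib power_one_over)
      then show ?thesis
        using mult_le_cancel_left_pos[of "(1/2)^k * \<epsilon>"] \<open>0 < \<epsilon>\<close> by simp
    qed
    show "exp (- C3 * \<Psi> \<epsilon>)
        \<le> (\<Prod>k. measure (density lborel std_normal_density)
               {x. (1/2)^k * \<epsilon> * \<bar>x\<bar> \<le> r^k * \<epsilon>}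
             ^ covering_number T (gauss_dist M X) ((1/2)^(k+1) * \<epsilon>))"
      unfolding factor_eq C3_def
      using assms(1) by (intro prodinf_std_normal_power_ge_exp \<open>1 < a\<close> m \<open>0 \<le> \<Psi> \<epsilon>\<close> N_le) simp
  qed
qed

end
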